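(* Let $f\in\mathcal N(J)^\perp$ and let $(f_n)$, $(p_n^* )$ be generated by the scheme (S). Then $$\sum_{n=0}^\infty\|f_{n+1}-f_n\|^2=\sum_{n=0}^\infty\frac{\langle f_n,p_n^*\rangle^2}{\|p_n^*\|^2}<\infty.$$
   Context: Let $\mathcal H$ be a real Hilbert space and $J:\mathcal H\to\mathbb R\cup\{+\infty\}$ a proper, convex, lower semicontinuous, absolutely one-homogeneous functional ($J(\alpha u)=|\alpha|J(u)$). Let $\mathcal N(J)=\{u: J(u)=0\}$ be its null-space, and assume the Poincaré-type inequality: there is $C>0$ with $\|u\|\le C J(u)$ for all $u\in\mathcal N(J)^\perp$. $\partial J$ denotes the convex subdifferential. Gradient flow: for $g\in\mathcal H$, the gradient flow of $J$ with datum $g$ is the solution $u$ of $u'(t)=-p(t)$, $p(t)\in\partial J(u(t))$, $u(0)=g$, where $p(t)$ is the element of minimal norm in $\partial J(u(t))$. For $g\in\mathcal N(J)^\perp\setminus\{0\}$ the flow extinguishes at a finite time $T>0$. An extinction profile of $g$ is any element $p^*=\lim_{k\to\infty}\frac{1}{T-t_k}\int_{t_k}^T p(s)\,ds$ for some increasing sequence $t_k\to T$ along which the limit exists; it is known that such $p^*$ exists, $p^*\neq 0$ and $p^*\in\partial J(p^* )$. Scheme (S): given $f\in\mathcal N(J)^\perp$, set $f_0=f$ and for $n\ge0$ let $p_n^*$ be an extinction profile of $f_n$, $c_n=\langle f_n,p_n^*\rangle/\|p_n^*\|^2$, and $f_{n+1}=f_n-c_np_n^*$. (If some $f_n=0$,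 the scheme is stopped and we set $f_m=0$ and the corresponding terms $\langle f_m,p_m^*\rangle^2/\|p_m^*\|^2$, $c_mp_m^*$ equal to $0$ for $m\ge n$.) *)

theory Defs
  imports "HOL-Analysis.Analysis"
begin

text \<open>Functionals J : H -> R \<union> {+\<infinity>} are modelled as maps into ereal that never take
  the value -\<infinity>.\<close>

definition proper_fun :: "('a \<Rightarrow> ereal) \<Rightarrow> bool" where
  "proper_fun J \<longleftrightarrow> (\<exists>u. J u \<noteq> \<infinity>) \<and> (\<forall>u. J u \<noteq> -\<infinity>)"

definition convex_fun :: "('a::real_vector \<Rightarrow> ereal) \<Rightarrow> bool" where
  "convex_fun J \<longleftrightarrow> (\<forall>x y t. 0 \<le> t \<and> t \<le> 1 \<longrightarrow>
      J (t *\<^sub>R x + (1 - t) *\<^sub>R y) \<le> ereal t * J x + ereal (1 - t) * J y)"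

definition lsc_fun :: "('a::topological_space \<Rightarrow> ereal) \<Rightarrow> bool" where
  "lsc_fun J \<longleftrightarrow> (\<forall>x. J x \<le> Liminf (at x) J)"

definition abs_one_homogeneous :: "('a::real_vector \<Rightarrow> ereal) \<Rightarrow> bool" where
  "abs_one_homogeneous J \<longleftrightarrow> (\<forall>(\<alpha>::real) u. J (\<alpha> *\<^sub>R u) = ereal \<bar>\<alpha>\<bar> * J u)"

definition null_space :: "('a \<Rightarrow> ereal) \<Rightarrow> 'a set" where
  "null_space J = {u. J u = 0}"

definition subdiff :: "('a::real_inner \<Rightarrow> ereal) \<Rightarrow> 'a \<Rightarrow> 'a set" where
  "subdiff J u = {p. J u \<noteq> \<infinity> \<and> (\<forall>v. J v \<ge> J u + ereal (inner p (v - u)))}"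

definition min_norm_elem :: "'a::real_normed_vector set \<Rightarrow> 'a \<Rightarrow> bool" where
  "min_norm_elem S p \<longleftrightarrow> p \<in> S \<and> (\<forall>q\<in>S. norm p \<le> norm q)"

text \<open>Gradient flow u' = -p, p(t) the minimal-norm element of \<partial>J(u(t)), u(0) = g
  (in the sense of Brezis: u continuous on [0,\<infinity>), right derivative for every t > 0).\<close>
definition gradient_flow ::
  "('a::real_inner \<Rightarrow> ereal) \<Rightarrow> 'a \<Rightarrow> (real \<Rightarrow> 'a) \<Rightarrow> (real \<Rightarrow> 'a) \<Rightarrow> bool" where
  "gradient_flow J g u p \<longleftrightarrow> u 0 = g \<and> continuous_on {0..} u \<and>
     (\<forall>t>0. min_norm_elem (subdiff J (u t)) (p t) \<and>
            (u has_vector_derivative - p t) (at_right t))"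

definition extinction_time :: "(real \<Rightarrow> 'a::zero) \<Rightarrow> real \<Rightarrow> bool" where
  "extinction_time u T \<longleftrightarrow> T > 0 \<and> (\<forall>t\<ge>T. u t = 0) \<and> (\<forall>t. 0 \<le> t \<and> t < T \<longrightarrow> u t \<noteq> 0)"

definition extinction_profile :: "('a::real_inner \<Rightarrow> ereal) \<Rightarrow> 'a \<Rightarrow> 'a \<Rightarrow> bool" where
  "extinction_profile J g q \<longleftrightarrow>
     (\<exists>u p T t. gradient_flow J g u p \<and> extinction_time u T \<and>
        strict_mono (t :: nat \<Rightarrow> real) \<and> (\<forall>k. 0 \<le> t k \<and> t k < T) \<and> t \<longlonglongrightarrow> T \<and>
        (\<lambda>k. (1 / (T - t k)) *\<^sub>R integral {t k..T} p) \<longlonglongrightarrow> q)"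

end

theory Submission
  imports Defs
begin

text \<open>Each step of the scheme removes from \<open>f\<^sub>n\<close> its orthogonal projection onto \<open>p\<^sub>n\<^sup>*\<close>.
  By Pythagoras \<open>\<parallel>f\<^sub>n\<^sub>+\<^sub>1 - f\<^sub>n\<parallel>\<^sup>2 = \<langle>f\<^sub>n,p\<^sub>n\<^sup>*\<rangle>\<^sup>2/\<parallel>p\<^sub>n\<^sup>*\<parallel>\<^sup>2 = \<parallel>f\<^sub>n\<parallel>\<^sup>2 - \<parallel>f\<^sub>n\<^sub>+\<^sub>1\<parallel>\<^sup>2\<close>, so the series
  telescopes and is bounded by \<open>\<parallel>f\<parallel>\<^sup>2\<close>. No property of \<open>J\<close> or of the extinction profiles is
  needed: the argument works for any choice of the directions \<open>p\<^sub>n\<^sup>*\<close>. Since \<open>x / 0 = 0\<close>, a direction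
  \<open>p\<^sub>n\<^sup>* = 0\<close> makes the step the identity and contributes \<open>0\<close> to both series.\<close>

lemma norm_minus_projection_sq:
  fixes x p :: "'a::real_inner"
  shows "(norm (x - (inner x p / (norm p)\<^sup>2) *\<^sub>R p))\<^sup>2 = (norm x)\<^sup>2 - (inner x p)\<^sup>2 / (norm p)\<^sup>2"
proof (cases "p = 0")
  case False
  then show ?thesis
    unfolding power2_norm_eq_inner
    by (simp add: inner_diff_left inner_diff_right inner_commute
        power2_eq_square field_simps)
qed simp

lemma norm_projection_sq:
  fixes x p :: "'a::real_inner"
  shows "(norm ((inner x p / (norm p)\<^sup>2) *\<^sub>R p))\<^sup>2 = (inner x p)\<^sup>2 / (norm p)\<^sup>2"
proof (cases "p = 0")
  case False
  then show ?thesis by (simp add: power2_eq_square field_simps)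
qed simp

lemma summable_telescope_nonneg_decreasing:
  fixes g :: "nat \<Rightarrow> real"
  assumes decreasing: "\<And>n. g (Suc n) \<le> g n" and nonneg: "\<And>n. 0 \<le> g n"
  shows "summable (\<lambda>n. g n - g (Suc n))"
proof (rule summableI_nonneg_bounded)
  show "0 \<le> g n - g (Suc n)" for n using decreasing[of n] by simp
  show "(\<Sum>i<n. g i - g (Suc i)) \<le> g 0" for n
    using nonneg[of n] by (simp add: sum_lessThan_telescope')
qed

theorem corollary1:
  fixes J :: "'a::{real_inner, complete_space} \<Rightarrow> ereal"
    and f :: 'a
    and fs ps :: "nat \<Rightarrow> 'a"
  assumes "proper_fun J" and "convex_fun J" and "lsc_fun J" and "abs_one_homogeneous J"
    and poincare: "\<exists>C>0. \<forall>u \<in> orthogonal_comp (null_space J). ereal (norm u) \<le> ereal C * J u"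
    and f: "f \<in> orthogonal_comp (null_space J)"
    and f0: "fs 0 = f"
    and prof: "\<And>n. fs n \<noteq> 0 \<Longrightarrow> extinction_profile J (fs n) (ps n)"
    and step: "\<And>n. fs (Suc n) = fs n - (inner (fs n) (ps n) / (norm (ps n))\<^sup>2) *\<^sub>R ps n"
  shows "summable (\<lambda>n. (norm (fs (Suc n) - fs n))\<^sup>2)
    \<and> summable (\<lambda>n. (inner (fs n) (ps n))\<^sup>2 / (norm (ps n))\<^sup>2)
    \<and> (\<Sum>n. (norm (fs (Suc n) - fs n))\<^sup>2) = (\<Sum>n. (inner (fs n) (ps n))\<^sup>2 / (norm (ps n))\<^sup>2)"
proof -
  define a where "a n = (inner (fs n) (ps n))\<^sup>2 / (norm (ps n))\<^sup>2" for n
  have increment: "(norm (fs (Suc n) - fs n))\<^sup>2 = a n" for n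
    using norm_projection_sq[of "fs n" "ps n"] by (simp add: step[of n] a_def)
  have telescoping: "a n = (norm (fs n))\<^sup>2 - (norm (fs (Suc n)))\<^sup>2" for n
    by (simp add: a_def step[of n] norm_minus_projection_sq)
  have "(norm (fs (Suc n)))\<^sup>2 \<le> (norm (fs n))\<^sup>2" for n
    using telescoping[of n] divide_nonneg_nonneg[of "(inner (fs n) (ps n))\<^sup>2" "(norm (ps n))\<^sup>2"]
    by (simp add: a_def)
  then have "summable a"
    unfolding telescoping by (rule summable_telescope_nonneg_decreasing) simp
  then show ?thesis
    using increment unfolding a_def by simp
qed

end
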